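(* Let $N\ge1$, $W,N_0,P_A,P^{max}>0$ and for $i=1,\dots,N$ let $D_i,\zeta_i,h_i,g_i>0$. Consider the problem: minimize $\tau_0+\sum_{i=1}^N\tau_{S_i}$ over $\tau_0,\tau_{S_i},P_{S_i}\ge0$ subject to, for all $i$, $P_{S_i}\tau_{S_i}\le\zeta_iP_Ah_i\tau_0$, $\tau_{S_i}W\log_2\left(1+\frac{P_{S_i}g_i}{WN_0}\right)\ge D_i$, and $P_{S_i}\le P^{max}$. For each $i$ let $\ddot\tau_0^i=\frac{P^{max}}{\zeta_iP_Ah_i}\cdot\frac{D_i}{W\log_2(1+P^{max}g_i/(WN_0))}$ (the harvesting time for which, with source $i$ alone, all three constraints hold with equality), and let $\ddot\tau_0^{max}=\max_{i=1,\dots,N}\ddot\tau_0^i$. Then $\ddot\tau_0^{max}$ is an upper bound on the optimal value of $\tau_0$ in this problem.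
   Context: Multiple source wireless powered network: all sources harvest energy from an AP of power $P_A$ during a common time $\tau_0$ (source $i$ harvests $\zeta_iP_Ah_i\tau_0$), then each source $i$ transmits $D_i$ bits in its own slot of length $\tau_{S_i}$ with power $P_{S_i}\le P^{max}$ over an AWGN channel of gain $g_i$. *)

theory Defs
  imports Complex_Main
begin

definition feasible ::
  "nat \<Rightarrow> real \<Rightarrow> real \<Rightarrow> real \<Rightarrow> real \<Rightarrow> (nat \<Rightarrow> real) \<Rightarrow> (nat \<Rightarrow> real)
   \<Rightarrow> (nat \<Rightarrow> real) \<Rightarrow> (nat \<Rightarrow> real) \<Rightarrow> real \<Rightarrow> (nat \<Rightarrow> real) \<Rightarrow> (nat \<Rightarrow> real) \<Rightarrow> bool" where
  "feasible N W N0 PA Pmax D zeta h g tau0 tauS PS \<longleftrightarrow>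
     tau0 \<ge> 0 \<and>
     (\<forall>i\<in>{1..N}. tauS i \<ge> 0 \<and> PS i \<ge> 0 \<and>
        PS i * tauS i \<le> zeta i * PA * h i * tau0 \<and>
        tauS i * W * log 2 (1 + PS i * g i / (W * N0)) \<ge> D i \<and>
        PS i \<le> Pmax)"

definition objective :: "nat \<Rightarrow> real \<Rightarrow> (nat \<Rightarrow> real) \<Rightarrow> real" where
  "objective N tau0 tauS = tau0 + (\<Sum>i=1..N. tauS i)"

definition tau0_ddot :: "real \<Rightarrow> real \<Rightarrow> real \<Rightarrow> real \<Rightarrow> (nat \<Rightarrow> real) \<Rightarrow> (nat \<Rightarrow> real)
   \<Rightarrow> (nat \<Rightarrow> real) \<Rightarrow> (nat \<Rightarrow> real) \<Rightarrow> nat \<Rightarrow> real" where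
  "tau0_ddot W N0 PA Pmax D zeta h g i =
     Pmax / (zeta i * PA * h i) * (D i / (W * log 2 (1 + Pmax * g i / (W * N0))))"

definition tau0_ddot_max :: "nat \<Rightarrow> real \<Rightarrow> real \<Rightarrow> real \<Rightarrow> real \<Rightarrow> (nat \<Rightarrow> real) \<Rightarrow> (nat \<Rightarrow> real)
   \<Rightarrow> (nat \<Rightarrow> real) \<Rightarrow> (nat \<Rightarrow> real) \<Rightarrow> real" where
  "tau0_ddot_max N W N0 PA Pmax D zeta h g =
     Max ((tau0_ddot W N0 PA Pmax D zeta h g) ` {1..N})"

end

theory Submission
  imports Defs
begin

text \<open>Transmitting at full power Pmax is the fastest way for source i to deliver its D i bits,
  so every feasible slot is at least as long as the full-power slot. Giving each source its
  full-power slot and harvesting for the largest of the times needed to fund those slots is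
  feasible. Since the optimal slots are no shorter than these, an optimal harvesting time above
  that value would make this point strictly better than the optimum.\<close>

definition min_slot_time ::
  "real \<Rightarrow> real \<Rightarrow> real \<Rightarrow> (nat \<Rightarrow> real) \<Rightarrow> (nat \<Rightarrow> real) \<Rightarrow> nat \<Rightarrow> real" where
  "min_slot_time W N0 Pmax D g i = D i / (W * log 2 (1 + Pmax * g i / (W * N0)))"

lemma full_power_rate_pos:
  fixes W N0 Pmax gi :: real
  assumes "W > 0" "N0 > 0" "Pmax > 0" "gi > 0"
  shows "log 2 (1 + Pmax * gi / (W * N0)) > 0"
proof -
  have "Pmax * gi / (W * N0) > 0"
    using assms by simp
  then show ?thesis
    by simp
qed

lemma tau0_ddot_eq_min_slot_time:
  "tau0_ddot W N0 PA Pmax D zeta h g i = Pmax * min_slot_time W N0 Pmax D g i / (zeta i * PA * h i)"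
  unfolding tau0_ddot_def min_slot_time_def by simp

lemma min_slot_time_le_slot:
  assumes "W > 0" "N0 > 0" "Pmax > 0" "g i > 0" "i \<in> {1..N}"
    and "feasible N W N0 PA Pmax D zeta h g tau0 tauS PS"
  shows "min_slot_time W N0 Pmax D g i \<le> tauS i"
proof -
  let ?L = "log 2 (1 + Pmax * g i / (W * N0))"
  have slot: "tauS i \<ge> 0" "PS i \<ge> 0" "PS i \<le> Pmax"
    "D i \<le> tauS i * W * log 2 (1 + PS i * g i / (W * N0))"
    using assms(5,6) unfolding feasible_def by auto
  have "PS i * g i / (W * N0) \<le> Pmax * g i / (W * N0)"
    using slot assms by (intro divide_right_mono mult_right_mono) auto
  moreover have "1 + PS i * g i / (W * N0) > 0"
    using slot assms by (simp add: add_pos_nonneg)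
  ultimately have "log 2 (1 + PS i * g i / (W * N0)) \<le> ?L"
    by simp
  then have "tauS i * W * log 2 (1 + PS i * g i / (W * N0)) \<le> tauS i * W * ?L"
    using slot assms(1) by (intro mult_left_mono) auto
  with slot have "D i \<le> tauS i * (W * ?L)"
    by (simp add: mult.assoc)
  then show ?thesis
    unfolding min_slot_time_def
    using assms(1-4) full_power_rate_pos by (simp add: pos_divide_le_eq mult.commute)
qed

lemma feasible_full_power:
  assumes "W > 0" "N0 > 0" "PA > 0" "Pmax > 0"
    and "\<forall>i\<in>{1..N}. D i > 0 \<and> zeta i > 0 \<and> h i > 0 \<and> g i > 0"
    and "tau0 \<ge> 0" "\<forall>i\<in>{1..N}. tau0_ddot W N0 PA Pmax D zeta h g i \<le> tau0"
  shows "feasible N W N0 PA Pmax D zeta h g tau0 (min_slot_time W N0 Pmax D g) (\<lambda>_. Pmax)"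
  unfolding feasible_def
proof (intro conjI ballI \<open>tau0 \<ge> 0\<close>)
  fix i assume i: "i \<in> {1..N}"
  have L: "log 2 (1 + Pmax * g i / (W * N0)) > 0"
    using full_power_rate_pos assms(1,2,4,5) i by blast
  have "D i > 0"
    using assms(5) i by blast
  then show "min_slot_time W N0 Pmax D g i \<ge> 0"
    unfolding min_slot_time_def using L assms(1) by simp
  show "Pmax \<ge> 0" "Pmax \<le> Pmax"
    using assms(4) by auto
  show "D i \<le> min_slot_time W N0 Pmax D g i * W * log 2 (1 + Pmax * g i / (W * N0))"
    unfolding min_slot_time_def using L assms(1) by simp
  have "zeta i * PA * h i > 0"
    using assms(3,5) i by simp
  moreover have "Pmax * min_slot_time W N0 Pmax D g i / (zeta i * PA * h i) \<le> tau0"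
    using assms(7) i by (simp only: tau0_ddot_eq_min_slot_time)
  ultimately show "Pmax * min_slot_time W N0 Pmax D g i \<le> zeta i * PA * h i * tau0"
    by (simp add: pos_divide_le_eq mult.commute)
qed

lemma tau0_ddot_le_max:
  "i \<in> {1..N} \<Longrightarrow> tau0_ddot W N0 PA Pmax D zeta h g i \<le> tau0_ddot_max N W N0 PA Pmax D zeta h g"
  unfolding tau0_ddot_max_def by (intro Max_ge) auto

lemma tau0_ddot_max_pos:
  assumes "N \<ge> 1" "W > 0" "N0 > 0" "PA > 0" "Pmax > 0"
    and "\<forall>i\<in>{1..N}. D i > 0 \<and> zeta i > 0 \<and> h i > 0 \<and> g i > 0"
  shows "tau0_ddot_max N W N0 PA Pmax D zeta h g > 0"
proof -
  have one: "1 \<in> {1..N}"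
    using assms(1) by simp
  have "tau0_ddot W N0 PA Pmax D zeta h g 1 > 0"
    unfolding tau0_ddot_def using full_power_rate_pos assms(2-6) one by auto
  then show ?thesis
    using tau0_ddot_le_max[OF one, of W N0 PA Pmax D zeta h g] by linarith
qed

lemma optimal_tau0_le:
  assumes "\<forall>t0 tS P. feasible N W N0 PA Pmax D zeta h g t0 tS P \<longrightarrow>
             objective N tau0 tauS \<le> objective N t0 tS"
    and "feasible N W N0 PA Pmax D zeta h g t0 tS P"
    and "\<forall>i\<in>{1..N}. tS i \<le> tauS i"
  shows "tau0 \<le> t0"
proof -
  have "(\<Sum>i=1..N. tS i) \<le> (\<Sum>i=1..N. tauS i)"
    using assms(3) by (intro sum_mono) auto
  moreover have "objective N tau0 tauS \<le> objective N t0 tS"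
    using assms(1,2) by blast
  ultimately show ?thesis
    unfolding objective_def by linarith
qed

theorem lemma5:
  fixes N :: nat and W N0 PA Pmax :: real and D zeta h g :: "nat \<Rightarrow> real"
    and tau0 :: real and tauS PS :: "nat \<Rightarrow> real"
  assumes "N \<ge> 1" and "W > 0" and "N0 > 0" and "PA > 0" and "Pmax > 0"
    and "\<forall>i\<in>{1..N}. D i > 0 \<and> zeta i > 0 \<and> h i > 0 \<and> g i > 0"
    and opt_feas: "feasible N W N0 PA Pmax D zeta h g tau0 tauS PS"
    and opt_min: "\<forall>t0 tS P. feasible N W N0 PA Pmax D zeta h g t0 tS P \<longrightarrow>
                     objective N tau0 tauS \<le> objective N t0 tS"
  shows "tau0 \<le> tau0_ddot_max N W N0 PA Pmax D zeta h g"
proof -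
  let ?M = "tau0_ddot_max N W N0 PA Pmax D zeta h g"
  have "feasible N W N0 PA Pmax D zeta h g ?M (min_slot_time W N0 Pmax D g) (\<lambda>_. Pmax)"
    using assms(1-6) tau0_ddot_max_pos tau0_ddot_le_max
    by (intro feasible_full_power) (auto intro: less_imp_le)
  moreover have "\<forall>i\<in>{1..N}. min_slot_time W N0 Pmax D g i \<le> tauS i"
    using assms(2,3,5,6) by (auto intro: min_slot_time_le_slot[OF _ _ _ _ _ opt_feas])
  ultimately show ?thesis
    using opt_min by (rule optimal_tau0_le[rotated])
qed

end
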